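(* Let $\mathbf q^{CAV}=(q^{CAV}_1,\dots,q^{CAV}_R)$ be route flows with $q^{CAV}=\sum_rq^{CAV}_r>0$ and $\mathbf t^{CAV}=(t^{CAV}_1,\dots,t^{CAV}_R)$ the corresponding positive route travel times; let $t_{min}=\min_rt^{CAV}_r$, $t_{max}=\max_rt^{CAV}_r$ and $\overline{t^{CAV}}=\frac1{q^{CAV}}\sum_rq^{CAV}_rt^{CAV}_r$. Let $\gamma^F:I\to(0,\infty)$ be a measurable discount factor profile, and for an offer profile $T^{CAV}$ set $u^{HDV}_i=t_{min}$, $u^{CAV}_i=\gamma^F_iT^{CAV}_i$. (i) If there exists a feasible offer profile $T^{CAV}$ subject to $(\mathbf q^{CAV},\mathbf t^{CAV})$ with $u^{CAV}_i\le u^{HDV}_i$ for every $i$, then $\overline{t^{CAV}}\le t_{min}\,\mathbb E(1/\gamma^F)$. (ii) If $R=2$ and $t_{min}/t_{max}\le\gamma^F_i\le1$ for every $i$, then $\overline{t^{CAV}}\le t_{min}\,\mathbb E(1/\gamma^F)$ is also sufficient for the existence of such a feasible offer profile.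
   Context: Drivers form a measure space $(I,di)$ with total mass $|I|=q^{CAV}$ (interval with Lebesgue measure, or $\{1,\dots,q^{CAV}\}$ with counting measure). $\mathbb E(1/\gamma^F)=\frac1{|I|}\int_I\frac1{\gamma^F_i}\,di$. An offer profile subject to $(\mathbf q^{CAV},\mathbf t^{CAV})$ is a measurable $T^{CAV}:I\to[t_{min},t_{max}]$ with $\frac1{|I|}\int_IT^{CAV}_i\,di=\overline{t^{CAV}}$. An assignment plan inducing it is a measurable $\mu:I\times\{1,\dots,R\}\to[0,1]$ with $\int_I\mu(i,r)\,di=q^{CAV}_r$ for every $r$, $\sum_r\mu(i,r)=1$ and $\sum_rt^{CAV}_r\mu(i,r)=T^{CAV}_i$ for a.e. $i$; the profile is feasible if some assignment plan induces it. *)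

theory Defs
  imports "HOL-Analysis.Analysis"
begin

text \<open>Routes are indexed by 1..R; q r = route flow, t r = route travel time.\<close>

definition t_min :: "(nat \<Rightarrow> real) \<Rightarrow> nat \<Rightarrow> real" where
  "t_min t R = Min (t ` {1..R})"

definition t_max :: "(nat \<Rightarrow> real) \<Rightarrow> nat \<Rightarrow> real" where
  "t_max t R = Max (t ` {1..R})"

definition q_tot :: "(nat \<Rightarrow> real) \<Rightarrow> nat \<Rightarrow> real" where
  "q_tot q R = (\<Sum>r=1..R. q r)"

definition t_bar :: "(nat \<Rightarrow> real) \<Rightarrow> (nat \<Rightarrow> real) \<Rightarrow> nat \<Rightarrow> real" where
  "t_bar q t R = (\<Sum>r=1..R. q r * t r) / q_tot q R"

text \<open>E(1/gamma) as the normalized (possibly infinite) nonnegative integral.\<close>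
definition E_inv :: "'a measure \<Rightarrow> ('a \<Rightarrow> real) \<Rightarrow> ennreal" where
  "E_inv M \<gamma> = (\<integral>\<^sup>+ i. ennreal (1 / \<gamma> i) \<partial>M) / emeasure M (space M)"

definition offer_profile ::
  "'a measure \<Rightarrow> (nat \<Rightarrow> real) \<Rightarrow> (nat \<Rightarrow> real) \<Rightarrow> nat \<Rightarrow> ('a \<Rightarrow> real) \<Rightarrow> bool" where
  "offer_profile M q t R T \<longleftrightarrow>
     T \<in> borel_measurable M \<and>
     (\<forall>i\<in>space M. t_min t R \<le> T i \<and> T i \<le> t_max t R) \<and>
     (\<integral>i. T i \<partial>M) / measure M (space M) = t_bar q t R"

definition assignment_plan ::
  "'a measure \<Rightarrow> (nat \<Rightarrow> real) \<Rightarrow> (nat \<Rightarrow> real) \<Rightarrow> nat \<Rightarrow> ('a \<Rightarrow> real)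
     \<Rightarrow> ('a \<Rightarrow> nat \<Rightarrow> real) \<Rightarrow> bool" where
  "assignment_plan M q t R T \<mu> \<longleftrightarrow>
     (\<forall>r\<in>{1..R}. (\<lambda>i. \<mu> i r) \<in> borel_measurable M) \<and>
     (\<forall>i\<in>space M. \<forall>r\<in>{1..R}. 0 \<le> \<mu> i r \<and> \<mu> i r \<le> 1) \<and>
     (\<forall>r\<in>{1..R}. (\<integral>i. \<mu> i r \<partial>M) = q r) \<and>
     (AE i in M. (\<Sum>r=1..R. \<mu> i r) = 1 \<and> (\<Sum>r=1..R. t r * \<mu> i r) = T i)"

definition feasible_offer ::
  "'a measure \<Rightarrow> (nat \<Rightarrow> real) \<Rightarrow> (nat \<Rightarrow> real) \<Rightarrow> nat \<Rightarrow> ('a \<Rightarrow> real) \<Rightarrow> bool" where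
  "feasible_offer M q t R T \<longleftrightarrow>
     offer_profile M q t R T \<and> (\<exists>\<mu>. assignment_plan M q t R T \<mu>)"

end

(*
  Necessity: an offer profile with \<gamma>_i T_i \<le> t_min satisfies T_i \<le> t_min / \<gamma>_i pointwise;
  integrating over the drivers and dividing by the total mass gives
  mean(T) = t_bar \<le> t_min E(1/\<gamma>).

  Sufficiency for two routes: under t_min / t_max \<le> \<gamma> \<le> 1 the profiles t_min and t_min / \<gamma>
  both take values in [t_min, t_max] and undercut, and their means enclose t_bar, so a
  convex combination of them has mean exactly t_bar. With two routes every offer profile is
  feasible: driver i is assigned to route 1 with weight (T_i - t_2) / (t_1 - t_2), or q_1 / q
  if t_1 = t_2.
*)
theory Submission
  imports Defs
begin

lemma t_min_pos:
  assumes "1 \<le> R" and "\<forall>r\<in>{1..R}. 0 < t r"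
  shows "0 < t_min t R"
  using assms unfolding t_min_def by (subst Min_gr_iff) auto

lemma t_min_le_t_max:
  assumes "1 \<le> R"
  shows "t_min t R \<le> t_max t R"
proof -
  have "t 1 \<in> t ` {1..R}"
    using assms by simp
  then show ?thesis
    unfolding t_min_def t_max_def
    by (meson Max_ge Min_le finite_atLeastAtMost finite_imageI order_trans)
qed

lemma t_min_le_t_bar:
  assumes "\<forall>r\<in>{1..R}. 0 \<le> q r" and "0 < q_tot q R"
  shows "t_min t R \<le> t_bar q t R"
proof -
  have "t_min t R * q_tot q R = (\<Sum>r=1..R. q r * t_min t R)"
    by (simp add: q_tot_def sum_distrib_left mult.commute)
  also have "\<dots> \<le> (\<Sum>r=1..R. q r * t r)"
    using assms(1) by (intro sum_mono mult_left_mono) (auto simp: t_min_def)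
  finally show ?thesis
    using assms(2) by (simp add: t_bar_def pos_le_divide_eq)
qed

lemma atLeastAtMost_1_2: "{1..2::nat} = {1, 2}"
  by auto

lemma t_min_2: "t_min t 2 = min (t 1) (t 2)"
  unfolding t_min_def atLeastAtMost_1_2 by simp

lemma t_max_2: "t_max t 2 = max (t 1) (t 2)"
  unfolding t_max_def atLeastAtMost_1_2 by simp

lemma mean_le_E_inv:
  fixes T \<gamma> :: "'a \<Rightarrow> real"
  assumes fin: "finite_measure M"
    and T_meas: "T \<in> borel_measurable M" and \<gamma>_meas: "\<gamma> \<in> borel_measurable M" and "0 \<le> c"
    and bounds: "\<forall>i\<in>space M. 0 < \<gamma> i \<and> 0 \<le> T i \<and> \<gamma> i * T i \<le> c"
  shows "ennreal ((\<integral>i. T i \<partial>M) / measure M (space M)) \<le> ennreal c * E_inv M \<gamma>"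
proof (cases "measure M (space M) = 0")
  case False
  then have mass_pos: "0 < measure M (space M)"
    using measure_nonneg[of M "space M"] by linarith
  have "ennreal (\<integral>i. T i \<partial>M) \<le> (\<integral>\<^sup>+ i. ennreal (T i) \<partial>M)"
    using T_meas bounds by (simp add: integral_eq_nn_integral ennreal_enn2real_if)
  also have "\<dots> \<le> (\<integral>\<^sup>+ i. ennreal c * ennreal (1 / \<gamma> i) \<partial>M)"
  proof (intro nn_integral_mono)
    fix i assume "i \<in> space M"
    then have "T i \<le> c * (1 / \<gamma> i)"
      using bounds by (simp add: field_simps)
    then show "ennreal (T i) \<le> ennreal c * ennreal (1 / \<gamma> i)"
      using \<open>0 \<le> c\<close> by (simp add: ennreal_mult'[symmetric] ennreal_leI)
  qed
  also have "\<dots> = ennreal c * (\<integral>\<^sup>+ i. ennreal (1 / \<gamma> i) \<partial>M)"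
    using \<gamma>_meas by (intro nn_integral_cmult) auto
  finally have "ennreal (\<integral>i. T i \<partial>M) / ennreal (measure M (space M))
      \<le> ennreal c * (\<integral>\<^sup>+ i. ennreal (1 / \<gamma> i) \<partial>M) / ennreal (measure M (space M))"
    by (rule divide_right_mono_ennreal)
  moreover have "0 \<le> (\<integral>i. T i \<partial>M)"
    using bounds by (intro integral_nonneg_AE AE_I2) auto
  ultimately show ?thesis
    using mass_pos
    by (simp add: E_inv_def finite_measure.emeasure_eq_measure[OF fin] divide_ennreal
        ennreal_times_divide)
qed simp

lemma E_inv_eq_integral:
  assumes fin: "finite_measure M" and mass_pos: "0 < measure M (space M)"
    and \<gamma>_pos: "\<forall>i\<in>space M. 0 < \<gamma> i" and int: "integrable M (\<lambda>i. 1 / \<gamma> i)"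
  shows "E_inv M \<gamma> = ennreal ((\<integral>i. 1 / \<gamma> i \<partial>M) / measure M (space M))"
proof -
  have "0 \<le> (\<integral>i. 1 / \<gamma> i \<partial>M)"
    using \<gamma>_pos by (intro integral_nonneg_AE AE_I2) auto
  moreover have "(\<integral>\<^sup>+ i. ennreal (1 / \<gamma> i) \<partial>M) = ennreal (\<integral>i. 1 / \<gamma> i \<partial>M)"
    using int \<gamma>_pos by (intro nn_integral_eq_integral AE_I2) auto
  ultimately show ?thesis
    using mass_pos by (simp add: E_inv_def finite_measure.emeasure_eq_measure[OF fin] divide_ennreal)
qed

lemma integral_bound_of_le_E_inv:
  assumes fin: "finite_measure M" and mass_pos: "0 < measure M (space M)"
    and \<gamma>_pos: "\<forall>i\<in>space M. 0 < \<gamma> i" and int: "integrable M (\<lambda>i. 1 / \<gamma> i)"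
    and "0 \<le> c" and le: "ennreal a \<le> ennreal c * E_inv M \<gamma>"
  shows "a * measure M (space M) \<le> (\<integral>i. c / \<gamma> i \<partial>M)"
proof -
  have "0 \<le> (\<integral>i. 1 / \<gamma> i \<partial>M)"
    using \<gamma>_pos by (intro integral_nonneg_AE AE_I2) (auto intro: less_imp_le)
  then have "a \<le> c * ((\<integral>i. 1 / \<gamma> i \<partial>M) / measure M (space M))"
    using le \<open>0 \<le> c\<close> mass_pos
    by (simp add: E_inv_eq_integral[OF fin mass_pos \<gamma>_pos int] ennreal_mult[symmetric])
  moreover have "(\<integral>i. c / \<gamma> i \<partial>M) = c * (\<integral>i. 1 / \<gamma> i \<partial>M)"
    using integral_mult_right_zero[of M c "\<lambda>i. 1 / \<gamma> i"] by simp
  ultimately show ?thesis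
    using mass_pos by (simp add: pos_le_divide_eq mult.commute)
qed

lemma exists_between_with_integral:
  fixes f g :: "'a \<Rightarrow> real"
  assumes int_f: "integrable M f" and int_g: "integrable M g"
    and f_le_g: "\<forall>x\<in>space M. f x \<le> g x"
    and "(\<integral>x. f x \<partial>M) \<le> c" and "c \<le> (\<integral>x. g x \<partial>M)"
  obtains h where "integrable M h" and "\<forall>x\<in>space M. f x \<le> h x \<and> h x \<le> g x"
    and "(\<integral>x. h x \<partial>M) = c"
proof -
  define F G where "F = (\<integral>x. f x \<partial>M)" and "G = (\<integral>x. g x \<partial>M)"
  define \<theta> where "\<theta> = (if F = G then 0 else (c - F) / (G - F))"
  have \<theta>: "0 \<le> \<theta>" "\<theta> \<le> 1"
    using assms(4,5) by (auto simp: \<theta>_def F_def G_def divide_simps)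
  define h where "h = (\<lambda>x. f x + \<theta> * (g x - f x))"
  have "(\<integral>x. h x \<partial>M) = F + \<theta> * (G - F)"
    using int_f int_g by (simp add: h_def F_def G_def)
  also have "\<dots> = c"
    using assms(4,5) by (auto simp: \<theta>_def F_def G_def)
  finally have "(\<integral>x. h x \<partial>M) = c" .
  moreover have "f x \<le> h x \<and> h x \<le> g x" if "x \<in> space M" for x
    using f_le_g that \<theta> mult_left_le_one_le[of "g x - f x" \<theta>] by (simp add: h_def)
  moreover have "integrable M h"
    using int_f int_g by (simp add: h_def)
  ultimately show ?thesis
    using that by blast
qed

lemma assignment_plan_two_routesI:
  fixes w T :: "'a \<Rightarrow> real"
  assumes fin: "finite_measure M" and mass: "measure M (space M) = q 1 + q 2"
    and w_meas: "w \<in> borel_measurable M" and w_int: "(\<integral>i. w i \<partial>M) = q 1"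
    and w_bounds: "\<forall>i\<in>space M. 0 \<le> w i \<and> w i \<le> 1"
    and T_eq: "\<forall>i\<in>space M. T i = w i * t 1 + (1 - w i) * t 2"
  shows "assignment_plan M q t 2 T (\<lambda>i r. if r = 1 then w i else 1 - w i)"
proof -
  have "integrable M w"
    using w_meas w_bounds
    by (intro finite_measure.integrable_const_bound[OF fin, where B = 1] AE_I2) auto
  then have "(\<integral>i. 1 - w i \<partial>M) = q 2"
    using fin mass w_int by (simp add: finite_measure.integrable_const)
  then show ?thesis
    using w_meas w_int w_bounds T_eq
    unfolding assignment_plan_def atLeastAtMost_1_2 by auto
qed

lemma assignment_plan_two_routes:
  fixes T :: "'a \<Rightarrow> real"
  assumes fin: "finite_measure M" and mass: "measure M (space M) = q 1 + q 2"
    and q_nonneg: "0 \<le> q 1" "0 \<le> q 2" and q_pos: "0 < q 1 + q 2"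
    and T_meas: "T \<in> borel_measurable M"
    and T_bounds: "\<forall>i\<in>space M. min (t 1) (t 2) \<le> T i \<and> T i \<le> max (t 1) (t 2)"
    and T_int: "(\<integral>i. T i \<partial>M) = q 1 * t 1 + q 2 * t 2"
  shows "\<exists>\<mu>. assignment_plan M q t 2 T \<mu>"
proof (cases "t 1 = t 2")
  case True
  show ?thesis
  proof (rule exI, rule assignment_plan_two_routesI[OF fin mass])
    show "(\<lambda>i. q 1 / (q 1 + q 2)) \<in> borel_measurable M" by simp
    show "(\<integral>i. q 1 / (q 1 + q 2) \<partial>M) = q 1"
      using q_pos by (simp add: mass)
    show "\<forall>i\<in>space M. 0 \<le> q 1 / (q 1 + q 2) \<and> q 1 / (q 1 + q 2) \<le> 1"
      using q_nonneg q_pos by simp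
    show "\<forall>i\<in>space M. T i = q 1 / (q 1 + q 2) * t 1 + (1 - q 1 / (q 1 + q 2)) * t 2"
      using True T_bounds by (auto simp: algebra_simps)
  qed
next
  case False
  define w where "w = (\<lambda>i. (T i - t 2) / (t 1 - t 2))"
  have "integrable M T"
    using T_meas T_bounds
    by (intro finite_measure.integrable_const_bound[OF fin, where B = "\<bar>t 1\<bar> + \<bar>t 2\<bar>"] AE_I2)
      auto
  then have "(\<integral>i. w i \<partial>M) = ((\<integral>i. T i \<partial>M) - t 2 * (q 1 + q 2)) / (t 1 - t 2)"
    using fin by (simp add: w_def mass finite_measure.integrable_const mult.commute)
  also have "\<dots> = q 1"
    using False by (simp add: T_int field_simps)
  finally have w_int: "(\<integral>i. w i \<partial>M) = q 1" .
  show ?thesis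
  proof (rule exI, rule assignment_plan_two_routesI[OF fin mass _ w_int])
    show "w \<in> borel_measurable M"
      using T_meas by (simp add: w_def)
    show "\<forall>i\<in>space M. 0 \<le> w i \<and> w i \<le> 1"
      using T_bounds False by (auto simp: w_def divide_simps min_def max_def split: if_splits)
    have "w i * (t 1 - t 2) = T i - t 2" for i
      using False by (simp add: w_def)
    then show "\<forall>i\<in>space M. T i = w i * t 1 + (1 - w i) * t 2"
      by (simp add: algebra_simps)
  qed
qed

lemma exists_undercutting_offer_profile:
  fixes M :: "'a measure" and \<gamma> :: "'a \<Rightarrow> real"
  assumes fin: "finite_measure M" and mass: "measure M (space M) = q_tot q R"
    and q_nonneg: "\<forall>r\<in>{1..R}. 0 \<le> q r" and q_pos: "0 < q_tot q R"
    and t_pos: "\<forall>r\<in>{1..R}. 0 < t r"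
    and \<gamma>_meas: "\<gamma> \<in> borel_measurable M"
    and \<gamma>_bounds: "\<forall>i\<in>space M. t_min t R / t_max t R \<le> \<gamma> i \<and> \<gamma> i \<le> 1"
    and mean: "ennreal (t_bar q t R) \<le> ennreal (t_min t R) * E_inv M \<gamma>"
  obtains T where "offer_profile M q t R T" and "\<forall>i\<in>space M. \<gamma> i * T i \<le> t_min t R"
proof -
  define m X where "m = t_min t R" and "X = t_max t R"
  have "1 \<le> R"
    using q_pos by (cases R) (auto simp: q_tot_def)
  then have m_pos: "0 < m" and X_pos: "0 < X"
    using t_min_pos[OF _ t_pos] t_min_le_t_max[of R t] by (auto simp: m_def X_def)
  have \<gamma>_pos: "0 < \<gamma> i" and inv_le: "1 / \<gamma> i \<le> X / m"
    and m_le_offer: "m \<le> m / \<gamma> i" and offer_le_X: "m / \<gamma> i \<le> X"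
    if "i \<in> space M" for i
  proof -
    have lower: "m / X \<le> \<gamma> i" and upper: "\<gamma> i \<le> 1"
      using \<gamma>_bounds that by (auto simp: m_def X_def)
    moreover have "0 < m / X"
      using m_pos X_pos by simp
    ultimately show pos: "0 < \<gamma> i"
      by linarith
    show "1 / \<gamma> i \<le> X / m" and "m / \<gamma> i \<le> X"
      using pos lower m_pos X_pos by (simp_all add: field_simps)
    show "m \<le> m / \<gamma> i"
      using pos upper m_pos by (simp add: le_divide_eq)
  qed
  have int_inv: "integrable M (\<lambda>i. 1 / \<gamma> i)"
    using \<gamma>_meas \<gamma>_pos inv_le
    by (intro finite_measure.integrable_const_bound[OF fin, where B = "X / m"] AE_I2)
      (auto simp: abs_of_pos)
  have "t_bar q t R * q_tot q R \<le> (\<integral>i. m / \<gamma> i \<partial>M)"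
    using integral_bound_of_le_E_inv[OF fin _ _ int_inv _ mean] m_pos q_pos \<gamma>_pos
    by (simp add: mass m_def)
  moreover have "(\<integral>i. m \<partial>M) \<le> t_bar q t R * q_tot q R"
    using t_min_le_t_bar[OF q_nonneg q_pos] q_pos by (simp add: mass m_def)
  moreover have "integrable M (\<lambda>i. m / \<gamma> i)"
    using integrable_mult_right[OF int_inv, of m] by simp
  ultimately obtain T where T_int: "integrable M T"
    and T_bounds: "\<forall>i\<in>space M. m \<le> T i \<and> T i \<le> m / \<gamma> i"
    and T_mean: "(\<integral>i. T i \<partial>M) = t_bar q t R * q_tot q R"
    using exists_between_with_integral[OF finite_measure.integrable_const[OF fin]] m_le_offer
    by metis
  have "offer_profile M q t R T"
    unfolding offer_profile_def
    using T_int T_bounds offer_le_X T_mean q_pos by (force simp: mass m_def X_def)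
  moreover have "\<gamma> i * T i \<le> m" if "i \<in> space M" for i
    using T_bounds that \<gamma>_pos[OF that] by (simp add: le_divide_eq mult.commute)
  ultimately show ?thesis
    using that by (auto simp: m_def)
qed

lemma feasible_offer_two_routes:
  assumes fin: "finite_measure M" and mass: "measure M (space M) = q_tot q 2"
    and q_nonneg: "\<forall>r\<in>{1..2}. 0 \<le> q r" and q_pos: "0 < q_tot q 2"
    and offer: "offer_profile M q t 2 T"
  shows "feasible_offer M q t 2 T"
proof -
  have Q: "q_tot q 2 = q 1 + q 2"
    unfolding q_tot_def atLeastAtMost_1_2 by simp
  have T_meas: "T \<in> borel_measurable M"
    and T_bounds: "\<forall>i\<in>space M. min (t 1) (t 2) \<le> T i \<and> T i \<le> max (t 1) (t 2)"
    and "(\<integral>i. T i \<partial>M) / q_tot q 2 = t_bar q t 2"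
    using offer by (auto simp: offer_profile_def mass t_min_2 t_max_2)
  then have "(\<integral>i. T i \<partial>M) = q 1 * t 1 + q 2 * t 2"
    using q_pos unfolding t_bar_def atLeastAtMost_1_2 by (simp add: field_simps)
  moreover have "0 \<le> q 1" "0 \<le> q 2"
    using q_nonneg by auto
  ultimately show ?thesis
    using assignment_plan_two_routes[OF fin _ _ _ _ T_meas T_bounds] offer mass q_pos
    by (simp add: feasible_offer_def Q)
qed

theorem proposition4:
  fixes M :: "'a measure" and q t :: "nat \<Rightarrow> real" and R :: nat
    and \<gamma> :: "'a \<Rightarrow> real"
  assumes q_nonneg: "\<forall>r\<in>{1..R}. 0 \<le> q r"
    and q_pos: "q_tot q R > 0"
    and t_pos: "\<forall>r\<in>{1..R}. 0 < t r"
    and mass: "emeasure M (space M) = ennreal (q_tot q R)"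
    and \<gamma>_meas: "\<gamma> \<in> borel_measurable M"
    and \<gamma>_pos: "\<forall>i\<in>space M. 0 < \<gamma> i"
  shows
    "((\<exists>T. feasible_offer M q t R T \<and> (\<forall>i\<in>space M. \<gamma> i * T i \<le> t_min t R))
        \<longrightarrow> ennreal (t_bar q t R) \<le> ennreal (t_min t R) * E_inv M \<gamma>)
     \<and>
     ((R = 2 \<and> (\<forall>i\<in>space M. t_min t R / t_max t R \<le> \<gamma> i \<and> \<gamma> i \<le> 1))
        \<longrightarrow> ennreal (t_bar q t R) \<le> ennreal (t_min t R) * E_inv M \<gamma>
        \<longrightarrow> (\<exists>T. feasible_offer M q t R T \<and> (\<forall>i\<in>space M. \<gamma> i * T i \<le> t_min t R)))"
proof -
  have "1 \<le> R"
    using q_pos by (cases R) (auto simp: q_tot_def)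
  then have t_min_pos: "0 < t_min t R"
    using t_pos by (rule t_min_pos)
  have fin: "finite_measure M"
    using mass by (intro finite_measureI) auto
  have mass_real: "measure M (space M) = q_tot q R"
    using mass q_pos by (simp add: measure_def)
  have "ennreal (t_bar q t R) \<le> ennreal (t_min t R) * E_inv M \<gamma>"
    if "feasible_offer M q t R T" and "\<forall>i\<in>space M. \<gamma> i * T i \<le> t_min t R" for T
  proof -
    have T_meas: "T \<in> borel_measurable M" and T_ge: "\<forall>i\<in>space M. t_min t R \<le> T i"
      and t_bar_eq: "t_bar q t R = (\<integral>i. T i \<partial>M) / measure M (space M)"
      using that(1) by (auto simp: feasible_offer_def offer_profile_def)
    have "\<forall>i\<in>space M. 0 < \<gamma> i \<and> 0 \<le> T i \<and> \<gamma> i * T i \<le> t_min t R"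
      using \<gamma>_pos T_ge that(2) t_min_pos by (fastforce intro: order_trans[OF less_imp_le])
    then show ?thesis
      using mean_le_E_inv[OF fin T_meas \<gamma>_meas] t_min_pos by (simp add: t_bar_eq)
  qed
  moreover have "\<exists>T. feasible_offer M q t R T \<and> (\<forall>i\<in>space M. \<gamma> i * T i \<le> t_min t R)"
    if R: "R = 2" and "\<forall>i\<in>space M. t_min t R / t_max t R \<le> \<gamma> i \<and> \<gamma> i \<le> 1"
      and "ennreal (t_bar q t R) \<le> ennreal (t_min t R) * E_inv M \<gamma>"
    using exists_undercutting_offer_profile[OF fin mass_real q_nonneg q_pos t_pos \<gamma>_meas that(2,3)]
      feasible_offer_two_routes[OF fin] mass_real q_nonneg q_pos
    unfolding R by metis
  ultimately show ?thesis
    by blast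
qed

end
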